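(* Let $(t_n(x))_{n\ge0}$ be the generalized Gončarov basis associated with $(\mathfrak d,\mathcal Z)$, $\mathcal Z=(z_i)_{i\ge0}$, and let $d(t)\in\mathbb K[[t]]$ be the compositional inverse of the $D$-indicator of $\mathfrak d$. Then, as formal power series in $t$ with coefficients in $\mathbb K[x]$, $$e^{x\,d(t)}=\sum_{n\ge0}\frac{1}{n!}\,t_n(x)\,e^{z_n d(t)}\,t^n.$$ In particular, if $\mathfrak d=D$, then $e^{xt}=\sum_{n\ge0}\frac1{n!}t_n(x)e^{z_nt}t^n$.
   Context: $\mathbb K$ is a field of characteristic zero, $D=d/dx$ on $\mathbb K[x]$. A delta operator is a linear operator $\mathfrak d$ on $\mathbb K[x]$ commuting with all shifts $E_a:f(x)\mapsto f(x+a)$ and with $\mathfrak d(x)$ a nonzero constant. Every shift-invariant operator $S$ can be written uniquely as $S=\sum_{k\ge0}c_kD^k$; the formal power series $q(t)=\sum_k c_kt^k$ is its $D$-indicator. For a delta operator, $q(0)=0$ and $q'(0)\neq0$, so $q$ has a compositional inverse $d(t)$. $\varepsilon_z$ is evaluation at $z$. The generalized Gončarov basis associated with $(\mathfrak d,\mathcal Z)$ is the unique sequence $(t_n)_{n\ge0}$ with $\deg t_n=n$ and $\varepsilon_{z_i}(\mathfrak d^{\,i}(t_n))=n!\,\delta_{i,n}$ for all $i,n$. *)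

theory Defs
  imports "HOL-Computational_Algebra.Computational_Algebra"
begin

definition lin_op :: "('a::field poly \<Rightarrow> 'a poly) \<Rightarrow> bool" where
  "lin_op S \<longleftrightarrow> (\<forall>p q. S (p + q) = S p + S q) \<and> (\<forall>c p. S (smult c p) = smult c (S p))"

definition shift_op :: "'a::field \<Rightarrow> 'a poly \<Rightarrow> 'a poly" where
  "shift_op a p = pcompose p [:a, 1:]"

definition shift_invariant :: "('a::field poly \<Rightarrow> 'a poly) \<Rightarrow> bool" where
  "shift_invariant S \<longleftrightarrow> (\<forall>a p. S (shift_op a p) = shift_op a (S p))"

definition delta_operator :: "('a::field poly \<Rightarrow> 'a poly) \<Rightarrow> bool" where
  "delta_operator S \<longleftrightarrow> lin_op S \<and> shift_invariant S \<and> (\<exists>c. c \<noteq> 0 \<and> S [:0, 1:] = [:c:])"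

text \<open>q is the D-indicator of S: S = sum_k q_k D^k (the sum is finite on each polynomial,
  since D^k p = 0 for k > deg p).\<close>
definition D_indicator :: "('a::field_char_0 poly \<Rightarrow> 'a poly) \<Rightarrow> 'a fps \<Rightarrow> bool" where
  "D_indicator S q \<longleftrightarrow> (\<forall>p. S p = (\<Sum>k\<le>degree p. smult (q $ k) ((pderiv ^^ k) p)))"

definition goncarov_basis ::
  "('a::field_char_0 poly \<Rightarrow> 'a poly) \<Rightarrow> (nat \<Rightarrow> 'a) \<Rightarrow> (nat \<Rightarrow> 'a poly) \<Rightarrow> bool" where
  "goncarov_basis S z t \<longleftrightarrow>
     (\<forall>n. degree (t n) = n \<and>
          (\<forall>i. poly ((S ^^ i) (t n)) (z i) = (if i = n then fact n else 0)))"

definition lift_fps :: "'a::zero fps \<Rightarrow> 'a poly fps" where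
  "lift_fps f = Abs_fps (\<lambda>n. [:f $ n:])"

definition exp_x_fps :: "'a::field_char_0 poly fps" where
  "exp_x_fps = Abs_fps (\<lambda>k. monom (inverse (fact k)) k)"

end

theory Submission
  imports Defs
begin

text \<open>
  Write \<open>d = fps_inv q\<close> and let \<open>P\<^sub>m(x)\<close> be the coefficient of \<open>t\<^sup>m\<close> in \<open>e\<^bsup>x d(t)\<^esup>\<close>,
  a polynomial of degree at most \<open>m\<close>. Since \<open>\<delta>\<close> acts on \<open>e\<^bsup>x d(t)\<^esup>\<close> as multiplication by
  \<open>q(d(t)) = t\<close>, we get \<open>\<delta> P\<^sub>m\<^sub>+\<^sub>1 = P\<^sub>m\<close>, hence \<open>\<delta>\<^sup>n P\<^sub>m = P\<^sub>m\<^sub>-\<^sub>n\<close>.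
  A polynomial of degree at most \<open>m\<close> is determined by the values \<open>(\<delta>\<^sup>n g)(z\<^sub>n)\<close>, \<open>n \<le> m\<close>,
  because \<open>\<delta>\<close> lowers the degree by exactly one; this gives the Gon\<c>arov interpolation formula
  \<open>g = \<Sum>\<^sub>n\<^sub>\<le>\<^sub>m (\<delta>\<^sup>n g)(z\<^sub>n) t\<^sub>n / n!\<close>. Applied to \<open>P\<^sub>m\<close>, and with \<open>P\<^sub>m\<^sub>-\<^sub>n(z\<^sub>n)\<close> the coefficient
  of \<open>t\<^sup>m\<^sup>-\<^sup>n\<close> in \<open>e\<^bsup>z\<^sub>n d(t)\<^esup>\<close>, this is the claimed identity coefficientwise.
\<close>

lemma coeff_funpow_pderiv:
  fixes p :: "'a::field_char_0 poly"
  shows "coeff ((pderiv ^^ j) p) k = coeff p (k + j) * fact (k + j) / fact k"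
proof (induction j arbitrary: k)
  case 0
  then show ?case by simp
next
  case (Suc j)
  have "coeff ((pderiv ^^ Suc j) p) k = of_nat (Suc k) * coeff ((pderiv ^^ j) p) (Suc k)"
    by (simp add: coeff_pderiv)
  also have "\<dots> = of_nat (Suc k) * (coeff p (Suc k + j) * fact (Suc k + j) / fact (Suc k))"
    using Suc by simp
  also have "\<dots> = coeff p (k + Suc j) * fact (k + Suc j) / fact k"
    by (simp add: fact_Suc field_simps del: of_nat_Suc)
  finally show ?case .
qed

lemma D_indicator_coeff:
  assumes "D_indicator S q" and "degree p \<le> N"
  shows "coeff (S p) k = (\<Sum>j\<le>N. q $ j * coeff p (k + j) * fact (k + j) / fact k)"
proof -
  have "coeff (S p) k = (\<Sum>j\<le>degree p. q $ j * coeff p (k + j) * fact (k + j) / fact k)"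
    using assms(1) unfolding D_indicator_def
    by (simp add: coeff_sum coeff_funpow_pderiv mult.assoc)
  also have "\<dots> = (\<Sum>j\<le>N. q $ j * coeff p (k + j) * fact (k + j) / fact k)"
    by (rule sum.mono_neutral_left) (use assms(2) in \<open>auto simp: coeff_eq_0\<close>)
  finally show ?thesis .
qed

lemma D_indicator_pderiv: "D_indicator pderiv fps_X"
  unfolding D_indicator_def
proof
  fix p :: "'a poly"
  show "pderiv p = (\<Sum>k\<le>degree p. smult (fps_X $ k) ((pderiv ^^ k) p))"
  proof (cases "degree p")
    case 0
    then show ?thesis by (simp add: pderiv_eq_0_iff)
  next
    case (Suc e)
    have "(\<Sum>k\<le>degree p. smult (fps_X $ k) ((pderiv ^^ k) p))
        = (\<Sum>k\<in>{1}. smult (fps_X $ k) ((pderiv ^^ k) p))"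
      by (rule sum.mono_neutral_right) (use Suc in auto)
    then show ?thesis by simp
  qed
qed

lemma D_indicator_delta_operator:
  assumes "delta_operator S" and "D_indicator S q"
  shows "q $ 0 = 0" and "q $ 1 \<noteq> 0"
proof -
  obtain c where "c \<noteq> 0" and "S [:0, 1:] = [:c:]"
    using assms(1) unfolding delta_operator_def by blast
  moreover have "coeff (S [:0, 1:]) 1 = q $ 0" and "coeff (S [:0, 1:]) 0 = q $ 1"
    using D_indicator_coeff[OF assms(2), of "[:0, 1:]" 1] by simp_all
  ultimately show "q $ 0 = 0" and "q $ 1 \<noteq> 0" by auto
qed

lemma lin_op_0: "lin_op S \<Longrightarrow> S 0 = 0"
  unfolding lin_op_def by (metis smult_0_left)

lemma lin_op_diff: "lin_op S \<Longrightarrow> S (p - r) = S p - S r"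
  unfolding lin_op_def by (metis add_diff_cancel diff_add_cancel)

lemma lin_op_smult: "lin_op S \<Longrightarrow> S (smult c p) = smult c (S p)"
  unfolding lin_op_def by blast

lemma lin_op_sum: "lin_op S \<Longrightarrow> S (\<Sum>i\<in>A. f i) = (\<Sum>i\<in>A. S (f i))"
  by (induction A rule: infinite_finite_induct) (auto simp: lin_op_0 lin_op_def)

lemma lin_op_funpow: "lin_op S \<Longrightarrow> lin_op (S ^^ n)"
  by (induction n) (auto simp: lin_op_def)

lemma lin_op_pderiv: "lin_op pderiv"
  unfolding lin_op_def by (simp add: pderiv_add pderiv_smult)

context
  fixes S :: "'a::field_char_0 poly \<Rightarrow> 'a poly" and q :: "'a fps"
  assumes indicator: "D_indicator S q" and q0: "q $ 0 = 0" and q1: "q $ 1 \<noteq> 0"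
begin

lemma degree_D_indicator_le: "degree (S g) \<le> degree g - 1"
proof (rule degree_le, intro allI impI)
  fix i
  assume "degree g - 1 < i"
  then have "degree g \<le> i" by simp
  then show "coeff (S g) i = 0"
    unfolding D_indicator_coeff[OF indicator order.refl]
  proof (intro sum.neutral ballI)
    fix j
    show "q $ j * coeff g (i + j) * fact (i + j) / fact i = 0"
      using \<open>degree g \<le> i\<close> q0 by (cases "j = 0") (auto simp: coeff_eq_0)
  qed
qed

lemma coeff_D_indicator_top:
  assumes "degree g = Suc e"
  shows "coeff (S g) e = q $ 1 * coeff g (Suc e) * of_nat (Suc e)"
proof -
  define f where "f j = q $ j * coeff g (e + j) * fact (e + j) / (fact e :: 'a)" for j
  have "coeff (S g) e = (\<Sum>j\<le>Suc e. f j)"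
    unfolding f_def D_indicator_coeff[OF indicator order.refl] assms ..
  also have "\<dots> = f 1 + (\<Sum>j\<in>{..Suc e} - {1}. f j)"
    by (rule sum.remove) auto
  also have "(\<Sum>j\<in>{..Suc e} - {1}. f j) = 0"
  proof (intro sum.neutral ballI)
    fix j
    assume "j \<in> {..Suc e} - {1}"
    then have "j = 0 \<or> degree g < e + j" using assms by auto
    then show "f j = 0" by (auto simp: f_def q0 coeff_eq_0)
  qed
  finally show ?thesis by (simp add: f_def fact_Suc)
qed

lemma D_indicator_eq_0_imp_degree_0:
  assumes "S g = 0"
  shows "degree g = 0"
proof (rule ccontr)
  assume "degree g \<noteq> 0"
  then obtain e where e: "degree g = Suc e" by (cases "degree g") auto
  then have "coeff g (Suc e) \<noteq> 0" by (metis leading_coeff_0_iff degree_0 nat.distinct(1))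
  moreover have "(of_nat (Suc e) :: 'a) \<noteq> 0" by (metis of_nat_eq_0_iff nat.distinct(1))
  ultimately have "coeff (S g) e \<noteq> 0"
    using q1 by (simp add: coeff_D_indicator_top[OF e] del: of_nat_Suc)
  with assms show False by simp
qed

lemma goncarov_data_eq_0_imp_eq_0:
  "degree g \<le> m \<Longrightarrow> (\<forall>i\<le>m. poly ((S ^^ i) g) (z i) = 0) \<Longrightarrow> g = 0"
proof (induction m arbitrary: g z)
  case 0
  then show ?case by (metis degree_0_id le_zero_eq funpow_0 order.refl poly_const_conv pCons_0_0)
next
  case (Suc m)
  have "degree (S g) \<le> m" using degree_D_indicator_le[of g] Suc.prems(1) by simp
  moreover have "\<forall>i\<le>m. poly ((S ^^ i) (S g)) (z (Suc i)) = 0"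
    using Suc.prems(2) by (auto simp: funpow_Suc_right simp del: funpow.simps)
  ultimately have "S g = 0" using Suc.IH[of "S g" "z \<circ> Suc"] by simp
  then have "g = [:coeff g 0:]" by (metis D_indicator_eq_0_imp_degree_0 degree_0_id)
  moreover have "poly g (z 0) = 0" using Suc.prems(2) by auto
  ultimately show ?case by (metis poly_const_conv pCons_0_0)
qed

lemma goncarov_interpolation:
  assumes lin: "lin_op S" and basis: "goncarov_basis S z t" and deg: "degree g \<le> m"
  shows "g = (\<Sum>n\<le>m. smult (poly ((S ^^ n) g) (z n) / fact n) (t n))"
proof -
  define c where "c n = poly ((S ^^ n) g) (z n) / fact n" for n
  define h where "h = g - (\<Sum>n\<le>m. smult (c n) (t n))"
  have deg_t: "degree (t n) = n"
    and eval_t: "poly ((S ^^ i) (t n)) (z i) = (if i = n then fact n else 0)" for n i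
    using basis unfolding goncarov_basis_def by auto
  have "degree h \<le> m"
    unfolding h_def using deg
    by (intro degree_diff_le degree_sum_le) (auto intro: order.trans[OF degree_smult_le] simp: deg_t)
  moreover have "\<forall>i\<le>m. poly ((S ^^ i) h) (z i) = 0"
  proof (intro allI impI)
    fix i
    assume i: "i \<le> m"
    have L: "lin_op (S ^^ i)" by (rule lin_op_funpow[OF lin])
    have "poly ((S ^^ i) h) (z i)
        = poly ((S ^^ i) g) (z i) - (\<Sum>n\<le>m. c n * (if i = n then fact n else 0))"
      unfolding h_def lin_op_diff[OF L] lin_op_sum[OF L] lin_op_smult[OF L]
      by (simp add: poly_sum eval_t)
    also have "(\<Sum>n\<le>m. c n * (if i = n then fact n else 0)) = c i * fact i"
      using i by (simp add: if_distrib[of "\<lambda>x. c _ * x"] sum.delta cong: if_cong)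
    finally show "poly ((S ^^ i) h) (z i) = 0" by (simp add: c_def)
  qed
  ultimately have "h = 0" by (rule goncarov_data_eq_0_imp_eq_0)
  then show ?thesis by (simp add: h_def c_def)
qed

end

lemma lift_fps_nth [simp]: "lift_fps f $ n = [:f $ n:]"
  by (simp add: lift_fps_def)

lemma lift_fps_one: "lift_fps (1 :: 'a::comm_ring_1 fps) = 1"
  by (rule fps_ext) (simp add: lift_fps_def)

lemma lift_fps_X: "lift_fps (fps_X :: 'a::comm_ring_1 fps) = fps_X"
  by (rule fps_ext) (simp add: lift_fps_def)

lemma const_poly_sum: "[:sum f A:] = (\<Sum>i\<in>A. [:f i:])"
  by (rule poly_eqI) (simp add: coeff_sum coeff_pCons split: nat.split)

lemma lift_fps_mult: "lift_fps (a * b :: 'a::comm_ring_1 fps) = lift_fps a * lift_fps b"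
  by (rule fps_ext) (simp add: fps_mult_nth const_poly_sum mult.commute)

lemma lift_fps_power: "lift_fps (a ^ n :: 'a::comm_ring_1 fps) = lift_fps a ^ n"
  by (induction n) (simp_all add: lift_fps_one lift_fps_mult)

text \<open>\<open>m! * exp_compose_coeff (fps_inv q) m\<close> is the \<open>m\<close>-th basic polynomial of the delta operator.\<close>

definition exp_compose_coeff :: "'a::field_char_0 fps \<Rightarrow> nat \<Rightarrow> 'a poly" where
  "exp_compose_coeff d m = (\<Sum>i\<le>m. monom ((d ^ i) $ m / fact i) i)"

lemma exp_x_fps_compose_nth: "(exp_x_fps oo lift_fps d) $ m = exp_compose_coeff d m"
  unfolding fps_compose_nth exp_compose_coeff_def exp_x_fps_def lift_fps_power[symmetric]
    atLeast0AtMost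
  by (intro sum.cong refl) (simp add: mult.commute[of "monom _ _"] smult_monom field_simps)

lemma poly_exp_compose_coeff: "poly (exp_compose_coeff d m) x = (fps_exp x oo d) $ m"
  unfolding exp_compose_coeff_def fps_compose_nth poly_sum poly_monom atLeast0AtMost
  by (intro sum.cong refl) simp

lemma degree_exp_compose_coeff: "degree (exp_compose_coeff d m) \<le> m"
  unfolding exp_compose_coeff_def
  by (rule degree_sum_le) (auto intro: order.trans[OF degree_monom_le])

lemma coeff_exp_compose_coeff:
  assumes "d $ 0 = 0"
  shows "coeff (exp_compose_coeff d m) k = (d ^ k) $ m / fact k"
  using startsby_zero_power_prefix[OF assms, of k]
  by (auto simp: exp_compose_coeff_def coeff_sum)

lemma power_mult_compose_nth:
  fixes d q :: "'a::idom fps"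
  assumes d0: "d $ 0 = 0"
  shows "(d ^ k * (q oo d)) $ M = (\<Sum>j\<le>M. q $ j * (d ^ (k + j)) $ M)"
proof -
  define f where "f i = (if i < k then 0 else q $ (i - k)) * (d ^ i) $ M" for i
  have "d ^ k * (q oo d) = (fps_X ^ k * q) oo d"
    using fps_compose_power[OF d0, of fps_X k] d0
    by (simp add: fps_compose_mult_distrib[OF d0])
  also have "\<dots> $ M = (\<Sum>i=0..M. f i)"
    unfolding fps_compose_nth f_def
    by (intro sum.cong refl) (simp add: mult.commute[of "fps_X ^ k"] fps_X_power_mult_right_nth)
  also have "\<dots> = (\<Sum>i=0..M + k. f i)"
    by (rule sum.mono_neutral_left) (auto simp: f_def startsby_zero_power_prefix[OF d0])
  also have "\<dots> = (\<Sum>i=k..M + k. f i)"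
    by (rule sum.mono_neutral_right) (auto simp: f_def)
  also have "\<dots> = (\<Sum>i=0..M. f (i + k))"
    using sum.shift_bounds_cl_nat_ivl[of f 0 k M] by simp
  also have "\<dots> = (\<Sum>j\<le>M. q $ j * (d ^ (k + j)) $ M)"
    unfolding atLeast0AtMost by (intro sum.cong refl) (simp add: f_def add.commute)
  finally show ?thesis .
qed

context
  fixes S :: "'a::field_char_0 poly \<Rightarrow> 'a poly" and q d :: "'a fps"
  assumes indicator: "D_indicator S q" and d0: "d $ 0 = 0" and inverse: "q oo d = fps_X"
begin

lemma D_indicator_exp_compose_coeff_Suc:
  "S (exp_compose_coeff d (Suc m)) = exp_compose_coeff d m"
proof (rule poly_eqI)
  fix k
  have "coeff (S (exp_compose_coeff d (Suc m))) k
      = (\<Sum>j\<le>Suc m. q $ j * ((d ^ (k + j)) $ Suc m / fact (k + j)) * fact (k + j) / fact k)"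
    using D_indicator_coeff[OF indicator degree_exp_compose_coeff]
    by (simp add: coeff_exp_compose_coeff[OF d0])
  also have "\<dots> = (\<Sum>j\<le>Suc m. q $ j * (d ^ (k + j)) $ Suc m) / fact k"
    by (subst sum_divide_distrib) (intro sum.cong refl; simp)
  also have "\<dots> = (d ^ k * fps_X) $ Suc m / fact k"
    unfolding inverse[symmetric] power_mult_compose_nth[OF d0] ..
  also have "\<dots> = coeff (exp_compose_coeff d m) k"
    using fps_X_power_mult_right_nth[of "d ^ k" 1 "Suc m"]
    by (simp add: coeff_exp_compose_coeff[OF d0])
  finally show "coeff (S (exp_compose_coeff d (Suc m))) k = coeff (exp_compose_coeff d m) k" .
qed

lemma funpow_D_indicator_exp_compose_coeff:
  assumes "n \<le> m"
  shows "(S ^^ n) (exp_compose_coeff d m) = exp_compose_coeff d (m - n)"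
  using assms
proof (induction n)
  case 0
  then show ?case by simp
next
  case (Suc n)
  then have "m - n = Suc (m - Suc n)" by simp
  with Suc show ?case by (simp add: D_indicator_exp_compose_coeff_Suc)
qed

end

theorem goncarov_exp_expansion:
  fixes S :: "'a::field_char_0 poly \<Rightarrow> 'a poly"
  assumes lin: "lin_op S" and indicator: "D_indicator S q"
    and q0: "q $ 0 = 0" and q1: "q $ 1 \<noteq> 0" and basis: "goncarov_basis S z t"
  shows "(\<lambda>n. fps_const (smult (inverse (fact n)) (t n))
              * lift_fps (fps_exp (z n) oo fps_inv q) * fps_X ^ n)
           sums (exp_x_fps oo lift_fps (fps_inv q))"
proof -
  define d where "d = fps_inv q"
  have d0: "d $ 0 = 0" by (simp add: d_def fps_inv_def)
  have inverse: "q oo d = fps_X" unfolding d_def by (rule fps_inv_right[OF q0 q1])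
  define T where
    "T n = fps_const (smult (inverse (fact n)) (t n)) * lift_fps (fps_exp (z n) oo d) * fps_X ^ n"
    for n
  have T_nth: "T n $ m = (if n \<le> m
      then smult (poly (exp_compose_coeff d (m - n)) (z n) / fact n) (t n) else 0)" for n m
    unfolding T_def fps_X_power_mult_right_nth
    by (simp add: poly_exp_compose_coeff divide_inverse mult.commute[of _ "[:_:]"]
        mult.commute[of "inverse _"])
  have "(\<lambda>N. \<Sum>n<N. T n) \<longlonglongrightarrow> (exp_x_fps oo lift_fps d)"
  proof (rule tendsto_fpsI, rule eventually_sequentiallyI)
    fix m N
    assume N: "Suc m \<le> N"
    have "(\<Sum>n<N. T n) $ m = (\<Sum>n\<le>m. T n $ m)"
      unfolding fps_sum_nth by (rule sum.mono_neutral_right) (use N in \<open>auto simp: T_nth\<close>)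
    also have "\<dots> = (\<Sum>n\<le>m.
        smult (poly ((S ^^ n) (exp_compose_coeff d m)) (z n) / fact n) (t n))"
      by (intro sum.cong refl)
        (simp add: T_nth funpow_D_indicator_exp_compose_coeff[OF indicator d0 inverse])
    also have "\<dots> = exp_compose_coeff d m"
      by (rule goncarov_interpolation[OF indicator q0 q1 lin basis degree_exp_compose_coeff,
            symmetric])
    finally show "(\<Sum>n<N. T n) $ m = (exp_x_fps oo lift_fps d) $ m"
      by (simp add: exp_x_fps_compose_nth)
  qed
  then show ?thesis unfolding sums_def T_def d_def .
qed

theorem mainTheorem13:
  fixes \<delta> :: "'a::field_char_0 poly \<Rightarrow> 'a poly"
    and q :: "'a fps"
    and z :: "nat \<Rightarrow> 'a"
    and t :: "nat \<Rightarrow> 'a poly"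
  assumes "delta_operator \<delta>"
    and "D_indicator \<delta> q"
    and "goncarov_basis \<delta> z t"
  shows "(\<lambda>n. fps_const (smult (inverse (fact n)) (t n))
              * lift_fps (fps_exp (z n) oo fps_inv q) * fps_X ^ n)
           sums (exp_x_fps oo lift_fps (fps_inv q))
         \<and> (\<forall>t'. goncarov_basis pderiv z t' \<longrightarrow>
           (\<lambda>n. fps_const (smult (inverse (fact n)) (t' n))
              * lift_fps (fps_exp (z n)) * fps_X ^ n) sums exp_x_fps)"
proof (intro conjI allI impI)
  have "lin_op \<delta>" using assms(1) unfolding delta_operator_def by blast
  then show "(\<lambda>n. fps_const (smult (inverse (fact n)) (t n))
              * lift_fps (fps_exp (z n) oo fps_inv q) * fps_X ^ n)
           sums (exp_x_fps oo lift_fps (fps_inv q))"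
    using goncarov_exp_expansion D_indicator_delta_operator assms by blast
next
  fix t'
  assume basis: "goncarov_basis pderiv z t'"
  have "(\<lambda>n. fps_const (smult (inverse (fact n)) (t' n))
              * lift_fps (fps_exp (z n) oo fps_inv fps_X) * fps_X ^ n)
           sums (exp_x_fps oo lift_fps (fps_inv fps_X))"
    by (rule goncarov_exp_expansion[OF lin_op_pderiv D_indicator_pderiv _ _ basis]) simp_all
  moreover have "fps_inv (fps_X :: 'a fps) = fps_X"
    using fps_inv[of "fps_X :: 'a fps"] by simp
  ultimately show "(\<lambda>n. fps_const (smult (inverse (fact n)) (t' n))
              * lift_fps (fps_exp (z n)) * fps_X ^ n) sums exp_x_fps"
    by (simp add: lift_fps_X)
qed

end
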